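(* Let $\theta$ be a perfect symmetric paperfolding morphism on $\{a,b,c,d\}$ and let $\mathcal{L}_\theta$ be the language generated by $\theta$. Then ${\rm S}^\oplus(\mathcal{L}_\theta)=\mathbb{Z}\times\mathbb{Z}$.
   Context: Let ${\rm S}^\oplus$ be the homomorphism from words over $\{a,b,c,d\}$ to $\mathbb{Z}\times\mathbb{Z}$ given by ${\rm S}^\oplus(a)=(1,0)$, ${\rm S}^\oplus(b)=(0,1)$, ${\rm S}^\oplus(c)=(-1,0)$, ${\rm S}^\oplus(d)=(0,-1)$ and ${\rm S}^\oplus(w_1\cdots w_n)=\sum_i{\rm S}^\oplus(w_i)$. The language $\mathcal{L}_\theta$ generated by a morphism $\theta$ is the set of all nonempty finite words occurring as factors of $\theta^n(x)$ for some $n\ge0$ and some letter $x$. Let $\sigma$ be the rotation morphism $\sigma(a)=b$, $\sigma(b)=c$, $\sigma(c)=d$, $\sigma(d)=a$, and $\tau$ the reversal anti-morphism $\tau(w_1\cdots w_n)=w_n\cdots w_1$. A morphism $\theta$ on $\{a,b,c,d\}$ is a paperfolding morphism if (1) $\sigma\tau\theta=\theta$ and (2) in the word $\theta(a)$ letters from $\{a,c\}$ alternate with letters from $\{b,d\}$. It is symmetric if $\sigma\theta=\theta\sigma$ (equivalently, $\theta(a)$ is a palindrome). An infinite word $x=x_0x_1\cdots$ generates the walk $Z_0=(0,0)$, $Z_{n+1}=Z_n+{\rm S}^\oplus(x_n)$. A paperfolding morphism $\theta$ with $\theta(a)$ beginning with $a$ (and $|\theta(a)|\ge2$) is perfect if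 the four walks generated by the fixed point $x=\theta^\infty(a)$ and its rotations $\sigma(x),\sigma^2(x),\sigma^3(x)$ together visit every point of $\mathbb{Z}\times\mathbb{Z}$ other than the origin exactly twice, and the origin exactly four times. (Example: $\theta(a)=abcba$, $\theta(b)=bcdcb$, $\theta(c)=cdadc$, $\theta(d)=dabad$.) *)

theory Defs
  imports Main "HOL-Library.Product_Plus"
begin

datatype letter = A | B | C | D

type_synonym morph = "letter \<Rightarrow> letter list"

fun Sv :: "letter \<Rightarrow> int \<times> int" where
  "Sv A = (1, 0)" | "Sv B = (0, 1)" | "Sv C = (-1, 0)" | "Sv D = (0, -1)"

definition Ssum :: "letter list \<Rightarrow> int \<times> int" where
  "Ssum w = sum_list (map Sv w)"

fun rot :: "letter \<Rightarrow> letter" where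
  "rot A = B" | "rot B = C" | "rot C = D" | "rot D = A"

definition ext :: "morph \<Rightarrow> letter list \<Rightarrow> letter list" where
  "ext \<theta> w = concat (map \<theta> w)"

definition language :: "morph \<Rightarrow> letter list set" where
  "language \<theta> = {w. w \<noteq> [] \<and> (\<exists>n x u v. u @ w @ v = (ext \<theta> ^^ n) [x])}"

definition in_ac :: "letter \<Rightarrow> bool" where
  "in_ac x \<longleftrightarrow> x = A \<or> x = C"

(* (1): sigma tau theta = theta, read as: theta(sigma x) = sigma(reverse(theta x));
   (2): in theta(a), letters from {a,c} alternate with letters from {b,d} *)
definition paperfolding :: "morph \<Rightarrow> bool" where
  "paperfolding \<theta> \<longleftrightarrow>
     (\<forall>x. \<theta> (rot x) = map rot (rev (\<theta> x))) \<and>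
     (\<forall>i. Suc i < length (\<theta> A) \<longrightarrow> in_ac (\<theta> A ! i) \<noteq> in_ac (\<theta> A ! Suc i))"

definition symmetric_morph :: "morph \<Rightarrow> bool" where
  "symmetric_morph \<theta> \<longleftrightarrow> (\<forall>x. \<theta> (rot x) = map rot (\<theta> x))"

(* fixed point theta^infinity(a); well defined when theta(a) starts with a and |theta(a)| \<ge> 2 *)
definition fixpt :: "morph \<Rightarrow> nat \<Rightarrow> letter" where
  "fixpt \<theta> n = (ext \<theta> ^^ Suc n) [A] ! n"

definition walk :: "(nat \<Rightarrow> letter) \<Rightarrow> nat \<Rightarrow> int \<times> int" where
  "walk x n = (\<Sum>i<n. Sv (x i))"

definition perfect :: "morph \<Rightarrow> bool" where
  "perfect \<theta> \<longleftrightarrow> paperfolding \<theta> \<and> length (\<theta> A) \<ge> 2 \<and> hd (\<theta> A) = A \<and>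
     (\<forall>p. card {(j, n). j < (4::nat) \<and> walk ((rot ^^ j) \<circ> fixpt \<theta>) n = p}
            = (if p = (0, 0) then 4 else 2))"

end

theory Submission
  imports Defs
begin

(* A point p other than the origin is reached at some time n > 0 by one of the four rotated walks,
   and the corresponding prefix of theta^n of the rotated letter a is a factor with sum p.  For the
   origin it suffices that the walk Z of the fixed point is not injective: the factor between two
   visits of the same point sums to 0.

   As theta(a) is a palindrome whose second letter is a quarter turn R(a), the prefixes of length L^j
   of the fixed point give Z(L^j - r) = Z(L^j) - Z(r) and Z(L^j + r) = Z(L^j) + R(Z(r)).  So if Z(n')
   is a quarter turn of Z(n) with n >= 1, two distinct times L^j - n and L^j + n' (possibly with n
   and n' exchanged) lead to the same point.  Perfectness makes (1,0) visited a second time.  A visit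
   by the unrotated or a quarter-turned walk gives such a coincidence directly.  A visit by the
   half-turned walk means Z(n) = (-1,0); then the arc Z(1), ..., Z(n) closed up by its antipodal
   image is a lattice loop around the origin, which the quarter-turned walk, being unbounded when Z
   is injective, has to cross. *)

section \<open>Lattice loops and crossing parity\<close>

lemma card_changes_even_iff:
  fixes f :: "nat \<Rightarrow> bool"
  shows "even (card {l. l < n \<and> f l \<noteq> f (Suc l)}) \<longleftrightarrow> f 0 = f n"
proof (induction n)
  case (Suc n)
  have "{l. l < Suc n \<and> f l \<noteq> f (Suc l)} =
      {l. l < n \<and> f l \<noteq> f (Suc l)} \<union> {l. l = n \<and> f n \<noteq> f (Suc n)}"
    by (auto simp: less_Suc_eq)
  then show ?case using Suc by (cases "f n = f (Suc n)") (auto simp: card_Un_disjoint)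
qed simp

lemma card_Collect_less_add:
  fixes n :: nat
  shows "card {l. l < m + n \<and> P l} = card {l. l < m \<and> P l} + card {l. l < n \<and> P (m + l)}"
proof (induction n)
  case (Suc n)
  have "{l. l < m + Suc n \<and> P l} = {l. l < m + n \<and> P l} \<union> {l. l = m + n \<and> P (m + n)}"
    by (auto simp: less_Suc_eq)
  moreover have "{l. l < Suc n \<and> P (m + l)} = {l. l < n \<and> P (m + l)} \<union> {l. l = n \<and> P (m + n)}"
    by (auto simp: less_Suc_eq)
  ultimately show ?case using Suc by (cases "P (m + n)") auto
qed simp

lemma card_Collect_disj:
  fixes n :: nat
  assumes "\<And>l. l < n \<Longrightarrow> P l \<longleftrightarrow> Q l \<or> R l" and "\<And>l. l < n \<Longrightarrow> \<not> (Q l \<and> R l)"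
  shows "card {l. l < n \<and> P l} = card {l. l < n \<and> Q l} + card {l. l < n \<and> R l}"
proof -
  have "{l. l < n \<and> P l} = {l. l < n \<and> Q l} \<union> {l. l < n \<and> R l}" using assms(1) by auto
  moreover have "card ({l. l < n \<and> Q l} \<union> {l. l < n \<and> R l}) = card {l. l < n \<and> Q l} + card {l. l < n \<and> R l}"
    using assms(2) by (intro card_Un_disjoint) auto
  ultimately show ?thesis by simp
qed

definition unit_step :: "int \<times> int \<Rightarrow> int \<times> int \<Rightarrow> bool" where
  "unit_step p q \<longleftrightarrow> q - p \<in> {(1, 0), (-1, 0), (0, 1), (0, -1)}"

lemma unit_step_cases:
  assumes "unit_step p q"
  obtains "q = p + (1, 0)" | "q = p - (1, 0)" | "q = p + (0, 1)" | "q = p - (0, 1)"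
  using assms by (cases p; cases q) (auto simp: unit_step_def algebra_simps)

lemma unit_step_uminus: "unit_step p q \<Longrightarrow> unit_step (- p) (- q)"
  by (cases p; cases q) (auto simp: unit_step_def)

(* The edge from p to p' crosses the vertical half-line rising from the point (fst q + 1/2, snd q). *)
definition crosses_above :: "int \<times> int \<Rightarrow> int \<times> int \<Rightarrow> int \<times> int \<Rightarrow> bool" where
  "crosses_above q p p' \<longleftrightarrow>
     snd p = snd p' \<and> snd q < snd p \<and> {fst p, fst p'} = {fst q, fst q + 1}"

lemma crosses_above_column_change:
  assumes "unit_step p p'" and "p \<noteq> q + (1, 0)" and "p' \<noteq> q + (1, 0)"
  shows "(fst p = fst q + 1 \<and> snd q < snd p) \<noteq> (fst p' = fst q + 1 \<and> snd q < snd p')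
      \<longleftrightarrow> crosses_above q p p' \<or> crosses_above (q + (1, 0)) p p'"
    and "\<not> (crosses_above q p p' \<and> crosses_above (q + (1, 0)) p p')"
  using assms by (elim unit_step_cases; cases p; cases q; auto simp: crosses_above_def doubleton_eq_iff)+

lemma crosses_above_shift_up:
  assumes "unit_step p p'" and "p \<noteq> q + (0, 1)" and "p' \<noteq> q + (0, 1)"
  shows "crosses_above (q + (0, 1)) p p' \<longleftrightarrow> crosses_above q p p'"
  using assms by (elim unit_step_cases; cases p; cases q; auto simp: crosses_above_def doubleton_eq_iff)+

lemma crosses_above_origin_column:
  assumes "unit_step p p'" and "p \<noteq> 0" and "p' \<noteq> 0"
  shows "(1 \<le> fst p) \<noteq> (1 \<le> fst p') \<longleftrightarrow> crosses_above 0 p p' \<or> crosses_above (-1, 0) (- p) (- p')"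
    and "\<not> (crosses_above 0 p p' \<and> crosses_above (-1, 0) (- p) (- p'))"
  using assms by (elim unit_step_cases; cases p; auto simp: crosses_above_def doubleton_eq_iff zero_prod_def)+

lemma crosses_above_negative_axis:
  assumes "unit_step p p'" and "p \<noteq> 0" and "p' \<noteq> 0"
  shows "(fst p = 0 \<and> snd p < 0) \<noteq> (fst p' = 0 \<and> snd p' < 0)
      \<longleftrightarrow> crosses_above (-1, 0) (- p) (- p') \<or> crosses_above 0 (- p) (- p')"
    and "\<not> (crosses_above (-1, 0) (- p) (- p') \<and> crosses_above 0 (- p) (- p'))"
  using assms by (elim unit_step_cases; cases p; auto simp: crosses_above_def doubleton_eq_iff zero_prod_def)+

definition crossings :: "(nat \<Rightarrow> int \<times> int) \<Rightarrow> nat \<Rightarrow> int \<times> int \<Rightarrow> nat" where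
  "crossings \<gamma> n q = card {l. l < n \<and> crosses_above q (\<gamma> l) (\<gamma> (Suc l))}"

definition lattice_loop :: "(nat \<Rightarrow> int \<times> int) \<Rightarrow> nat \<Rightarrow> bool" where
  "lattice_loop \<gamma> n \<longleftrightarrow> (\<forall>l<n. unit_step (\<gamma> l) (\<gamma> (Suc l))) \<and> \<gamma> n = \<gamma> 0"

lemma lattice_loop_edge_points:
  assumes "lattice_loop \<gamma> n" and "l < n"
  shows "\<gamma> l \<in> \<gamma> ` {..<n}" and "\<gamma> (Suc l) \<in> \<gamma> ` {..<n}"
proof -
  show "\<gamma> l \<in> \<gamma> ` {..<n}" using assms(2) by simp
  have "\<gamma> (Suc l) = \<gamma> 0" if "Suc l = n" using assms(1) that by (simp add: lattice_loop_def)
  then show "\<gamma> (Suc l) \<in> \<gamma> ` {..<n}" using assms(2)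
    by (cases "Suc l = n") (auto intro: image_eqI[of _ _ 0])
qed

lemma crossings_parity_right:
  assumes loop: "lattice_loop \<gamma> n" and off: "q + (1, 0) \<notin> \<gamma> ` {..<n}"
  shows "even (crossings \<gamma> n (q + (1, 0))) \<longleftrightarrow> even (crossings \<gamma> n q)"
proof -
  define in_column where "in_column p \<longleftrightarrow> fst p = fst q + 1 \<and> snd q < snd p" for p
  have "card {l. l < n \<and> in_column (\<gamma> l) \<noteq> in_column (\<gamma> (Suc l))}
      = crossings \<gamma> n q + crossings \<gamma> n (q + (1, 0))"
    unfolding crossings_def
  proof (rule card_Collect_disj)
    fix l assume "l < n"
    then have "unit_step (\<gamma> l) (\<gamma> (Suc l))" using loop by (simp add: lattice_loop_def)
    moreover have "\<gamma> l \<noteq> q + (1, 0)" "\<gamma> (Suc l) \<noteq> q + (1, 0)"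
      using lattice_loop_edge_points[OF loop \<open>l < n\<close>] off by metis+
    ultimately show "in_column (\<gamma> l) \<noteq> in_column (\<gamma> (Suc l))
        \<longleftrightarrow> crosses_above q (\<gamma> l) (\<gamma> (Suc l)) \<or> crosses_above (q + (1, 0)) (\<gamma> l) (\<gamma> (Suc l))"
      and "\<not> (crosses_above q (\<gamma> l) (\<gamma> (Suc l)) \<and> crosses_above (q + (1, 0)) (\<gamma> l) (\<gamma> (Suc l)))"
      unfolding in_column_def by (rule crosses_above_column_change)+
  qed
  moreover have "even (card {l. l < n \<and> in_column (\<gamma> l) \<noteq> in_column (\<gamma> (Suc l))})"
    using card_changes_even_iff[of n "in_column \<circ> \<gamma>"] loop by (simp add: lattice_loop_def)
  ultimately show ?thesis by simp
qed

lemma crossings_shift_up: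
  assumes loop: "lattice_loop \<gamma> n" and off: "q + (0, 1) \<notin> \<gamma> ` {..<n}"
  shows "crossings \<gamma> n (q + (0, 1)) = crossings \<gamma> n q"
  unfolding crossings_def
proof (intro arg_cong[where f = card] Collect_cong conj_cong refl)
  fix l assume "l < n"
  then have "unit_step (\<gamma> l) (\<gamma> (Suc l))" using loop by (simp add: lattice_loop_def)
  moreover have "\<gamma> l \<noteq> q + (0, 1)" "\<gamma> (Suc l) \<noteq> q + (0, 1)"
    using lattice_loop_edge_points[OF loop \<open>l < n\<close>] off by metis+
  ultimately show "crosses_above (q + (0, 1)) (\<gamma> l) (\<gamma> (Suc l)) \<longleftrightarrow> crosses_above q (\<gamma> l) (\<gamma> (Suc l))"
    by (rule crosses_above_shift_up)
qed

lemma crossings_parity_step: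
  assumes loop: "lattice_loop \<gamma> n" and "unit_step q q'"
    and "q \<notin> \<gamma> ` {..<n}" and "q' \<notin> \<gamma> ` {..<n}"
  shows "even (crossings \<gamma> n q') \<longleftrightarrow> even (crossings \<gamma> n q)"
  using assms(2)
proof (cases rule: unit_step_cases)
  case 1 then show ?thesis using crossings_parity_right[OF loop] assms(4) by simp
next
  case 2 then show ?thesis using crossings_parity_right[OF loop, of q'] assms(3) by simp
next
  case 3 then show ?thesis using crossings_shift_up[OF loop] assms(4) by simp
next
  case 4 then show ?thesis using crossings_shift_up[OF loop, of q'] assms(3) by simp
qed

lemma crossings_eq_0:
  assumes "(\<forall>l\<le>n. snd (\<gamma> l) \<le> snd q) \<or> (\<forall>l\<le>n. fst (\<gamma> l) \<le> fst q)"
  shows "crossings \<gamma> n q = 0"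
proof -
  have "\<not> crosses_above q (\<gamma> l) (\<gamma> (Suc l))" if "l < n" for l
  proof -
    have "snd (\<gamma> l) \<le> snd q \<and> snd (\<gamma> (Suc l)) \<le> snd q \<or> fst (\<gamma> l) \<le> fst q \<and> fst (\<gamma> (Suc l)) \<le> fst q"
      using assms that by auto
    then show ?thesis by (auto simp: crosses_above_def doubleton_eq_iff)
  qed
  then show ?thesis by (auto simp: crossings_def)
qed

lemma path_leaving_loop_meets_loop:
  assumes loop: "lattice_loop \<gamma> n"
    and steps: "\<And>t. t < T \<Longrightarrow> unit_step (V t) (V (Suc t))"
    and inside: "odd (crossings \<gamma> n (V 0))"
    and outside: "(\<forall>l\<le>n. snd (\<gamma> l) \<le> snd (V T)) \<or> (\<forall>l\<le>n. fst (\<gamma> l) \<le> fst (V T))"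
  shows "\<exists>t\<le>T. V t \<in> \<gamma> ` {..<n}"
proof (rule ccontr)
  assume "\<not> ?thesis"
  then have "odd (crossings \<gamma> n (V t))" if "t \<le> T" for t
    using that
  proof (induction t)
    case (Suc t)
    then show ?case using crossings_parity_step[OF loop steps] by (simp add: Suc_le_eq)
  qed (use inside in simp)
  with crossings_eq_0[OF outside] show False by fastforce
qed

definition antipodal_closure :: "(nat \<Rightarrow> int \<times> int) \<Rightarrow> nat \<Rightarrow> nat \<Rightarrow> int \<times> int" where
  "antipodal_closure \<alpha> n l = (if l \<le> n then \<alpha> l else - \<alpha> (l - n))"

lemma antipodal_closure_second_half:
  "\<alpha> n = - \<alpha> 0 \<Longrightarrow> antipodal_closure \<alpha> n (n + m) = - \<alpha> m"
  by (cases m) (auto simp: antipodal_closure_def)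

lemma lattice_loop_antipodal_closure:
  assumes steps: "\<And>l. l < n \<Longrightarrow> unit_step (\<alpha> l) (\<alpha> (Suc l))" and ends: "\<alpha> n = - \<alpha> 0"
  shows "lattice_loop (antipodal_closure \<alpha> n) (n + n)"
  unfolding lattice_loop_def
proof (intro conjI allI impI)
  fix l assume l: "l < n + n"
  show "unit_step (antipodal_closure \<alpha> n l) (antipodal_closure \<alpha> n (Suc l))"
  proof (cases "l < n")
    case True
    then show ?thesis using steps by (simp add: antipodal_closure_def)
  next
    case False
    then obtain m where "l = n + m" and "m < n" using l by (metis add_less_cancel_left le_Suc_ex not_less)
    then show ?thesis
      using antipodal_closure_second_half[OF ends] steps unit_step_uminus
      by (metis add_Suc_right)
  qed
next
  show "antipodal_closure \<alpha> n (n + n) = antipodal_closure \<alpha> n 0"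
    using antipodal_closure_second_half[OF ends, of n] ends by (simp add: antipodal_closure_def)
qed

lemma crossings_antipodal_closure:
  assumes "\<alpha> n = - \<alpha> 0"
  shows "crossings (antipodal_closure \<alpha> n) (n + n) q = crossings \<alpha> n q + crossings (uminus \<circ> \<alpha>) n q"
proof -
  have "antipodal_closure \<alpha> n l = \<alpha> l" "antipodal_closure \<alpha> n (Suc l) = \<alpha> (Suc l)" if "l < n" for l
    using that by (simp_all add: antipodal_closure_def)
  moreover have "antipodal_closure \<alpha> n (n + l) = - \<alpha> l"
    "antipodal_closure \<alpha> n (Suc (n + l)) = - \<alpha> (Suc l)" for l
    using antipodal_closure_second_half[OF assms, of l] antipodal_closure_second_half[OF assms, of "Suc l"]
    by simp_all
  ultimately show ?thesis
    unfolding crossings_def card_Collect_less_add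
    by (intro arg_cong2[where f = "(+)"] arg_cong[where f = card] Collect_cong conj_cong refl) simp_all
qed

lemma antipodal_closure_points:
  "antipodal_closure \<alpha> n ` {..n + n} \<subseteq> \<alpha> ` {..n} \<union> uminus ` \<alpha> ` {..n}"
  by (auto simp: antipodal_closure_def)

(* The arc crosses the line x = 1/2 an odd number of times and the negative y-axis an even number
   of times; the crossings below the origin are counted in both. *)
lemma odd_crossings_origin:
  assumes steps: "\<And>l. l < n \<Longrightarrow> unit_step (\<alpha> l) (\<alpha> (Suc l))"
    and start: "\<alpha> 0 = (1, 0)" and stop: "\<alpha> n = (-1, 0)" and avoid: "\<And>l. l \<le> n \<Longrightarrow> \<alpha> l \<noteq> 0"
  shows "odd (crossings \<alpha> n 0 + crossings (uminus \<circ> \<alpha>) n 0)"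
proof -
  have edge: "unit_step (\<alpha> l) (\<alpha> (Suc l))" "\<alpha> l \<noteq> 0" "\<alpha> (Suc l) \<noteq> 0" if "l < n" for l
    using that steps avoid by auto
  let ?below = "crossings (uminus \<circ> \<alpha>) n (-1, 0)"
  have "card {l. l < n \<and> (1 \<le> fst (\<alpha> l)) \<noteq> (1 \<le> fst (\<alpha> (Suc l)))} = crossings \<alpha> n 0 + ?below"
    unfolding crossings_def comp_def
    by (rule card_Collect_disj) (rule crosses_above_origin_column[OF edge]; assumption)+
  moreover have "odd (card {l. l < n \<and> (1 \<le> fst (\<alpha> l)) \<noteq> (1 \<le> fst (\<alpha> (Suc l)))})"
    using card_changes_even_iff[of n "\<lambda>l. 1 \<le> fst (\<alpha> l)"] start stop by simp
  moreover have "card {l. l < n \<and> (fst (\<alpha> l) = 0 \<and> snd (\<alpha> l) < 0) \<noteq> (fst (\<alpha> (Suc l)) = 0 \<and> snd (\<alpha> (Suc l)) < 0)}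
      = ?below + crossings (uminus \<circ> \<alpha>) n 0"
    unfolding crossings_def comp_def
    by (rule card_Collect_disj) (rule crosses_above_negative_axis[OF edge]; assumption)+
  moreover have "even (card {l. l < n \<and> (fst (\<alpha> l) = 0 \<and> snd (\<alpha> l) < 0) \<noteq> (fst (\<alpha> (Suc l)) = 0 \<and> snd (\<alpha> (Suc l)) < 0)})"
    using card_changes_even_iff[of n "\<lambda>l. fst (\<alpha> l) = 0 \<and> snd (\<alpha> l) < 0"] start stop by simp
  ultimately show ?thesis by simp
qed

lemma unbounded_path_meets_antipodal_arc:
  assumes steps: "\<And>l. l < n \<Longrightarrow> unit_step (\<alpha> l) (\<alpha> (Suc l))"
    and start: "\<alpha> 0 = (1, 0)" and stop: "\<alpha> n = (-1, 0)" and avoid: "\<And>l. l \<le> n \<Longrightarrow> \<alpha> l \<noteq> 0"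
    and path: "\<And>t. unit_step (V t) (V (Suc t))" and origin: "V 0 = 0"
    and unbounded: "infinite (range V)"
  shows "\<exists>t k. k \<le> n \<and> (V t = \<alpha> k \<or> V t = - \<alpha> k)"
proof -
  define \<gamma> where "\<gamma> = antipodal_closure \<alpha> n"
  define S where "S = \<alpha> ` {..n} \<union> uminus ` \<alpha> ` {..n}"
  define K where "K = (\<Sum>p\<in>S. \<bar>fst p\<bar> + \<bar>snd p\<bar>)"
  have ends: "\<alpha> n = - \<alpha> 0" using start stop by simp
  have loop: "lattice_loop \<gamma> (n + n)"
    unfolding \<gamma>_def using steps ends by (rule lattice_loop_antipodal_closure)
  have inside: "odd (crossings \<gamma> (n + n) 0)"
    unfolding \<gamma>_def crossings_antipodal_closure[OF ends]
    using steps start stop avoid by (rule odd_crossings_origin)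
  have bounded: "\<bar>fst p\<bar> \<le> K \<and> \<bar>snd p\<bar> \<le> K" if "p \<in> S" for p
  proof -
    have "\<bar>fst p\<bar> + \<bar>snd p\<bar> \<le> K"
      unfolding K_def using that by (intro member_le_sum) (auto simp: S_def)
    then show ?thesis by linarith
  qed
  have on_loop: "\<gamma> l \<in> S" if "l \<le> n + n" for l
    using antipodal_closure_points that unfolding \<gamma>_def S_def by blast
  have reach: "\<exists>t. U t \<in> S"
    if U_path: "\<And>t. unit_step (U t) (U (Suc t))" and "U 0 = 0" and far: "K < fst (U T) \<or> K < snd (U T)"
    for U T
  proof -
    have "fst (\<gamma> l) \<le> K \<and> snd (\<gamma> l) \<le> K" if "l \<le> n + n" for l
      using bounded[OF on_loop[OF that]] by (simp add: abs_le_iff)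
    with far have "(\<forall>l\<le>n + n. snd (\<gamma> l) \<le> snd (U T)) \<or> (\<forall>l\<le>n + n. fst (\<gamma> l) \<le> fst (U T))"
      by force
    with inside \<open>U 0 = 0\<close> U_path obtain t where "U t \<in> \<gamma> ` {..<n + n}"
      using path_leaving_loop_meets_loop[OF loop, of T U] by fastforce
    then have "U t \<in> S" using on_loop by fastforce
    then show ?thesis ..
  qed
  obtain T where "V T \<notin> {-K..K} \<times> {-K..K}"
    using unbounded finite_subset[of "range V" "{-K..K} \<times> {-K..K}"] by auto
  then have "K < fst (V T) \<or> K < snd (V T) \<or> K < fst (- V T) \<or> K < snd (- V T)"
    by (cases "V T") auto
  then obtain t where "V t \<in> S \<or> - V t \<in> S"
    using reach[OF path origin] reach[of "\<lambda>t. - V t"] path origin unit_step_uminus by fastforce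
  moreover have "- p \<in> S" if "p \<in> S" for p using that unfolding S_def by force
  ultimately have "V t \<in> S" by (metis minus_minus)
  then show ?thesis unfolding S_def by blast
qed

lemma ext_Nil [simp]: "ext \<theta> [] = []"
  by (simp add: ext_def)

lemma ext_Cons [simp]: "ext \<theta> (x # w) = \<theta> x @ ext \<theta> w"
  by (simp add: ext_def)

lemma ext_append [simp]: "ext \<theta> (u @ v) = ext \<theta> u @ ext \<theta> v"
  by (simp add: ext_def)

lemma ext_pow_append: "(ext \<theta> ^^ n) (u @ v) = (ext \<theta> ^^ n) u @ (ext \<theta> ^^ n) v"
  by (induction n) auto

lemma Ssum_Nil [simp]: "Ssum [] = 0"
  by (simp add: Ssum_def)

lemma Ssum_Cons [simp]: "Ssum (x # w) = Sv x + Ssum w"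
  by (simp add: Ssum_def)

lemma Ssum_append [simp]: "Ssum (u @ v) = Ssum u + Ssum v"
  by (simp add: Ssum_def)

lemma Ssum_rev [simp]: "Ssum (rev w) = Ssum w"
  by (simp add: Ssum_def rev_map [symmetric] sum_list_rev)

definition rot_vec :: "int \<times> int \<Rightarrow> int \<times> int" where
  "rot_vec p = (- snd p, fst p)"

lemma rot_vec_pow_add: "(rot_vec ^^ j) (p + q) = (rot_vec ^^ j) p + (rot_vec ^^ j) q"
  by (induction j) (auto simp: rot_vec_def)

lemma rot_vec_pow_zero [simp]: "(rot_vec ^^ j) 0 = 0"
  by (induction j) (auto simp: rot_vec_def zero_prod_def)

lemma rot_vec_pow_sum: "(rot_vec ^^ j) (\<Sum>i\<in>I. f i) = (\<Sum>i\<in>I. (rot_vec ^^ j) (f i))"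
  by (induction I rule: infinite_finite_induct) (auto simp: rot_vec_pow_add)

lemma rot_vec_eq_0_iff: "rot_vec p = 0 \<longleftrightarrow> p = 0"
  by (cases p) (auto simp: rot_vec_def zero_prod_def)

lemma rot_vec_pow_eq_0_iff [simp]: "(rot_vec ^^ j) p = 0 \<longleftrightarrow> p = 0"
  by (induction j) (auto simp: rot_vec_eq_0_iff)

lemma rot_vec_pow_twice: "k = 1 \<or> k = 3 \<Longrightarrow> (rot_vec ^^ k) ((rot_vec ^^ k) p) = - p"
  by (cases p) (auto simp: rot_vec_def numeral_3_eq_3)

lemma rot_vec_pow_inverse:
  "k = 1 \<or> k = 3 \<Longrightarrow> s = 1 \<or> s = 3 \<Longrightarrow> k \<noteq> s \<Longrightarrow> (rot_vec ^^ k) ((rot_vec ^^ s) p) = p"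
  by (cases p) (auto simp: rot_vec_def numeral_3_eq_3)

lemma inj_rot_vec: "inj rot_vec"
  by (auto simp: inj_def rot_vec_def prod_eq_iff)

lemma unit_step_rot_vec: "unit_step p q \<Longrightarrow> unit_step (rot_vec p) (rot_vec q)"
  by (cases p; cases q) (auto simp: unit_step_def rot_vec_def)

lemma Sv_rot: "Sv (rot x) = rot_vec (Sv x)"
  by (cases x) (auto simp: rot_vec_def)

lemma Sv_rot_pow: "Sv ((rot ^^ j) x) = (rot_vec ^^ j) (Sv x)"
  by (induction j) (auto simp: Sv_rot)

lemma Ssum_map_rot_pow: "Ssum (map (rot ^^ j) w) = (rot_vec ^^ j) (Ssum w)"
  by (induction w) (auto simp: Sv_rot_pow rot_vec_pow_add)

lemma walk_0 [simp]: "walk x 0 = 0"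
  by (simp add: walk_def)

lemma walk_Suc: "walk x (Suc n) = walk x n + Sv (x n)"
  by (simp add: walk_def)

lemma unit_step_walk: "unit_step (walk x n) (walk x (Suc n))"
  by (cases "x n") (auto simp: walk_Suc unit_step_def)

lemma walk_map_rot_pow: "walk ((rot ^^ j) \<circ> x) n = (rot_vec ^^ j) (walk x n)"
  by (simp add: walk_def Sv_rot_pow rot_vec_pow_sum)

lemma walk_eq_Ssum_take:
  assumes "n \<le> length w" and "\<And>i. i < n \<Longrightarrow> x i = w ! i"
  shows "walk x n = Ssum (take n w)"
  using assms
proof (induction n)
  case (Suc n)
  then have "take (Suc n) w = take n w @ [w ! n]" by (simp add: take_Suc_conv_app_nth)
  with Suc show ?case by (simp add: walk_Suc)
qed (simp add: walk_def)

lemma inj_rot: "inj rot"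
proof (rule injI)
  show "rot x = rot y \<Longrightarrow> x = y" for x y by (cases x; cases y) simp_all
qed

lemma letter_eq_rot_pow_A: "\<exists>k. x = (rot ^^ k) A"
proof (cases x)
  case A then show ?thesis by (intro exI[of _ 0]) simp
next
  case B then show ?thesis by (intro exI[of _ 1]) simp
next
  case C then show ?thesis by (intro exI[of _ 2]) (simp add: numeral_2_eq_2)
next
  case D then show ?thesis by (intro exI[of _ 3]) (simp add: numeral_3_eq_3)
qed

section \<open>Symmetric paperfolding morphisms\<close>

locale symmetric_paperfolding =
  fixes \<theta> :: morph
  assumes paperfolding: "paperfolding \<theta>" and symmetric: "symmetric_morph \<theta>"
    and length_ge_2: "2 \<le> length (\<theta> A)" and head_A: "hd (\<theta> A) = A"
begin

definition L :: nat where
  "L = length (\<theta> A)"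

lemma rot_commute: "\<theta> (rot x) = map rot (\<theta> x)"
  using symmetric by (simp add: symmetric_morph_def)

lemma palindrome: "rev (\<theta> x) = \<theta> x"
proof -
  have "map rot (rev (\<theta> x)) = map rot (\<theta> x)"
    using paperfolding rot_commute[of x] by (simp add: paperfolding_def)
  with inj_rot show ?thesis by (simp add: inj_map_eq_map)
qed

lemma rot_pow_commute: "\<theta> ((rot ^^ k) x) = map (rot ^^ k) (\<theta> x)"
  by (induction k) (auto simp: rot_commute)

lemma length_image: "length (\<theta> x) = L"
  using letter_eq_rot_pow_A[of x] rot_pow_commute by (force simp: L_def)

lemma L_ge_2: "2 \<le> L"
  using length_ge_2 by (simp add: L_def)

lemma length_ext: "length (ext \<theta> w) = L * length w"
  by (induction w) (auto simp: length_image)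

lemma ext_pow_map_rot_pow: "(ext \<theta> ^^ n) (map (rot ^^ k) w) = map (rot ^^ k) ((ext \<theta> ^^ n) w)"
proof -
  have "ext \<theta> (map (rot ^^ k) w) = map (rot ^^ k) (ext \<theta> w)" for w
    by (induction w) (auto simp: rot_pow_commute)
  then show ?thesis by (induction n) auto
qed

lemma ext_rev: "ext \<theta> (rev w) = rev (ext \<theta> w)"
  by (induction w) (auto simp: palindrome)

lemma image_A: "\<theta> A = A # \<theta> A ! 1 # drop 2 (\<theta> A)"
proof -
  obtain y z w where "\<theta> A = y # z # w"
    using length_ge_2 by (metis Suc_le_length_iff numeral_2_eq_2)
  then show ?thesis using head_A by simp
qed

lemma second_letter:
  obtains k where "k = 1 \<or> k = 3" and "\<theta> A ! 1 = (rot ^^ k) A"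
proof -
  have "in_ac (\<theta> A ! 0) \<noteq> in_ac (\<theta> A ! 1)"
    using paperfolding length_ge_2 by (simp add: paperfolding_def)
  moreover have "\<theta> A ! 0 = A" using image_A by (metis nth_Cons_0)
  ultimately have "\<theta> A ! 1 = rot A \<or> \<theta> A ! 1 = (rot ^^ 3) A"
    by (cases "\<theta> A ! 1") (auto simp: in_ac_def numeral_3_eq_3)
  with that show thesis by fastforce
qed

definition iter_A :: "nat \<Rightarrow> letter list" where
  "iter_A n = (ext \<theta> ^^ n) [A]"

lemma length_iter_A: "length (iter_A n) = L ^ n"
  by (induction n) (auto simp: iter_A_def length_ext)

lemma rev_iter_A: "rev (iter_A n) = iter_A n"
  by (induction n) (auto simp: iter_A_def simp flip: ext_rev)

lemma iter_A_Suc: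
  assumes "\<theta> A ! 1 = (rot ^^ k) A"
  shows "iter_A (Suc n) = iter_A n @ map (rot ^^ k) (iter_A n) @ (ext \<theta> ^^ n) (drop 2 (\<theta> A))"
proof -
  have "\<theta> A = A # (rot ^^ k) A # drop 2 (\<theta> A)"
    using image_A assms by metis
  then have "iter_A (Suc n) = (ext \<theta> ^^ n) ([A] @ [(rot ^^ k) A] @ drop 2 (\<theta> A))"
    by (simp add: iter_A_def funpow_Suc_right del: funpow.simps)
  then show ?thesis
    using ext_pow_map_rot_pow[of n k "[A]"] by (simp only: ext_pow_append) (simp add: iter_A_def)
qed

lemma take_iter_A: "n \<le> m \<Longrightarrow> take (L ^ n) (iter_A m) = iter_A n"
proof (induction m rule: dec_induct)
  case (step m)
  obtain k where "\<theta> A ! 1 = (rot ^^ k) A" using second_letter by metis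
  then have "take (L ^ m) (iter_A (Suc m)) = iter_A m"
    by (simp add: iter_A_Suc length_iter_A)
  moreover have "L ^ n \<le> L ^ m" using step L_ge_2 by (simp add: power_increasing)
  ultimately show ?case using step by (metis min.absorb1 take_take)
qed (simp add: length_iter_A)

lemma less_L_pow: "i < L ^ i"
proof -
  have "i < 2 ^ i" by (rule less_exp)
  also have "(2::nat) ^ i \<le> L ^ i" using L_ge_2 by (rule power_mono) simp
  finally show ?thesis .
qed

lemma nth_iter_A: "i < L ^ n \<Longrightarrow> n \<le> m \<Longrightarrow> iter_A m ! i = iter_A n ! i"
  using take_iter_A[of n m] by (metis nth_take)

lemma fixpt_eq_nth:
  assumes "i < L ^ N"
  shows "fixpt \<theta> i = iter_A N ! i"
proof -
  have "fixpt \<theta> i = iter_A (Suc i) ! i" by (simp add: fixpt_def iter_A_def)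
  also have "\<dots> = iter_A (max N (Suc i)) ! i"
    using nth_iter_A[of i "Suc i" "max N (Suc i)"] less_L_pow[of "Suc i"] by simp
  also have "\<dots> = iter_A N ! i"
    using nth_iter_A[of i N "max N (Suc i)"] assms by simp
  finally show ?thesis .
qed

abbreviation Z :: "nat \<Rightarrow> int \<times> int" where
  "Z \<equiv> walk (fixpt \<theta>)"

lemma Z_eq_Ssum_take: "n \<le> L ^ N \<Longrightarrow> Z n = Ssum (take n (iter_A N))"
  by (rule walk_eq_Ssum_take) (auto simp: length_iter_A fixpt_eq_nth)

lemma Z_1: "Z 1 = (1, 0)"
proof -
  have "iter_A 1 = A # \<theta> A ! 1 # drop 2 (\<theta> A)" using image_A by (simp add: iter_A_def)
  then have "take 1 (iter_A 1) = [A]" by simp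
  then show ?thesis using Z_eq_Ssum_take[of 1 1] L_ge_2 by simp
qed

lemma Z_reflect:
  assumes "r \<le> L ^ j"
  shows "Z (L ^ j - r) = Z (L ^ j) - Z r"
proof -
  have "drop (L ^ j - r) (iter_A j) = rev (take r (iter_A j))"
    using rev_iter_A[of j] by (metis length_iter_A rev_rev_ident take_rev)
  then have "Z (L ^ j) = Z (L ^ j - r) + Z r"
    using assms Z_eq_Ssum_take[of _ j] append_take_drop_id[of "L ^ j - r" "iter_A j"]
    by (metis Ssum_append Ssum_rev diff_le_self length_iter_A order_refl take_all)
  then show ?thesis by simp
qed

lemma Z_turn:
  assumes "\<theta> A ! 1 = (rot ^^ k) A" and "r \<le> L ^ j"
  shows "Z (L ^ j + r) = Z (L ^ j) + (rot_vec ^^ k) (Z r)"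
proof -
  have "L ^ j + r \<le> 2 * L ^ j" using assms(2) by simp
  also have "\<dots> \<le> L ^ Suc j" using L_ge_2 by (simp only: power_Suc mult_le_mono1)
  finally have "L ^ j + r \<le> L ^ Suc j" .
  then have "Z (L ^ j + r) = Ssum (take (L ^ j + r) (iter_A (Suc j)))"
    by (rule Z_eq_Ssum_take)
  also have "take (L ^ j + r) (iter_A (Suc j)) = iter_A j @ map (rot ^^ k) (take r (iter_A j))"
    using assms by (simp add: iter_A_Suc length_iter_A take_map)
  finally show ?thesis
    using Z_eq_Ssum_take[of "L ^ j" j] Z_eq_Ssum_take[of r j] assms(2)
    by (simp add: Ssum_map_rot_pow length_iter_A)
qed

lemma Z_turned_collision:
  assumes "\<theta> A ! 1 = (rot ^^ k) A" and "k = 1 \<or> k = 3"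
    and "Z n' = (rot_vec ^^ k) (Z n)" and "1 \<le> n"
  shows "\<not> inj Z"
proof
  assume inj: "inj Z"
  define j where "j = n + n'"
  have n: "n \<le> L ^ j" and n': "n' \<le> L ^ j" using less_L_pow[of j] by (auto simp: j_def)
  \<comment> \<open>both sides equal \<open>Z (L ^ j) - Z n\<close>\<close>
  then have "Z (L ^ j + n') = Z (L ^ j - n)"
    using Z_turn[OF assms(1)] Z_reflect assms(3) rot_vec_pow_twice[OF assms(2)] by simp
  moreover have "L ^ j - n \<noteq> L ^ j + n'" using assms(4) n by linarith
  ultimately show False using inj by (auto dest: injD)
qed

lemma Z_rotated_not_inj:
  assumes "Z n' = (rot_vec ^^ s) (Z n)" and "s = 1 \<or> s = 3" and "1 \<le> n"
  shows "\<not> inj Z"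
proof
  assume inj: "inj Z"
  obtain k where k: "k = 1 \<or> k = 3" "\<theta> A ! 1 = (rot ^^ k) A" using second_letter .
  show False
  proof (cases "s = k")
    case True
    then show False using Z_turned_collision[OF k(2,1)] assms inj by simp
  next
    case False
    then have "Z n = (rot_vec ^^ k) (Z n')"
      using assms(1,2) k(1) rot_vec_pow_inverse by metis
    moreover have "n' \<noteq> 0"
    proof
      assume "n' = 0"
      with assms(1) have "Z n = Z 0" by (simp add: eq_commute[of 0])
      then have "n = 0" by (rule injD[OF inj])
      with assms(3) show False by simp
    qed
    ultimately show False using Z_turned_collision[OF k(2,1), of n n'] inj by simp
  qed
qed

lemma rot_Z_diff_in_Ssum_language:
  assumes "a < b"
  shows "(rot_vec ^^ j) (Z b - Z a) \<in> Ssum ` language \<theta>"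
proof -
  let ?u = "iter_A b"
  define v where "v = drop a (take b ?u)"
  have b: "b \<le> L ^ b" using less_L_pow[of b] by simp
  have prefix: "take a (take b ?u) = take a ?u" using assms by (simp add: min_absorb1)
  have "?u = (take a (take b ?u) @ v) @ drop b ?u" by (simp only: v_def append_take_drop_id)
  then have "map (rot ^^ j) (take a ?u) @ map (rot ^^ j) v @ map (rot ^^ j) (drop b ?u)
      = map (rot ^^ j) ?u"
    using prefix by (metis append.assoc map_append)
  also have "\<dots> = (ext \<theta> ^^ b) [(rot ^^ j) A]"
    using ext_pow_map_rot_pow[of b j "[A]"] by (simp add: iter_A_def)
  finally have "map (rot ^^ j) (take a ?u) @ map (rot ^^ j) v @ map (rot ^^ j) (drop b ?u)
      = (ext \<theta> ^^ b) [(rot ^^ j) A]" .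
  moreover have "v \<noteq> []" using assms b by (simp add: v_def length_iter_A)
  ultimately have "map (rot ^^ j) v \<in> language \<theta>" unfolding language_def by blast
  moreover have "Z b = Z a + Ssum v"
  proof -
    have "take b ?u = take a (take b ?u) @ v" by (simp only: v_def append_take_drop_id)
    then have "Z b = Ssum (take a ?u) + Ssum v" using Z_eq_Ssum_take[OF b] prefix by (metis Ssum_append)
    then show ?thesis using Z_eq_Ssum_take[of a b] assms b by simp
  qed
  ultimately show ?thesis by (force simp: Ssum_map_rot_pow)
qed

(* The arc Z 1, ..., Z n from (1, 0) to (-1, 0), closed up by its antipodal image, winds around the
   origin; the quarter-turned walk starts at the origin and is unbounded, so it crosses the loop. *)
lemma Z_half_turn_not_inj:
  assumes "Z n = (-1, 0)"
  shows "\<not> inj Z"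
proof
  assume inj: "inj Z"
  have nonzero: "Z l \<noteq> 0" if "l \<noteq> 0" for l
    using injD[OF inj, of l 0] that by auto
  have "n \<noteq> 0" using assms by (intro notI) (simp add: zero_prod_def)
  with assms have "Z (Suc (n - 1)) = (-1, 0)" by simp
  moreover have "infinite (range (rot_vec \<circ> Z))"
    using inj_compose[OF inj_rot_vec inj] finite_imageD by blast
  ultimately obtain t k where "rot_vec (Z t) = Z (Suc k) \<or> rot_vec (Z t) = - Z (Suc k)"
    using unbounded_path_meets_antipodal_arc[of "n - 1" "\<lambda>l. Z (Suc l)" "rot_vec \<circ> Z"]
      unit_step_walk unit_step_rot_vec Z_1 nonzero by (auto simp: rot_vec_def zero_prod_def)
  then have "Z (Suc k) = (rot_vec ^^ 1) (Z t) \<or> Z (Suc k) = (rot_vec ^^ 3) (Z t)"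
    by (cases "Z t"; cases "Z (Suc k)") (auto simp: rot_vec_def numeral_3_eq_3)
  moreover have "t \<noteq> 0" using calculation nonzero[of "Suc k"] by (cases t) (auto simp: rot_vec_eq_0_iff)
  ultimately show False using Z_rotated_not_inj inj by (metis One_nat_def Suc_leI neq0_conv)
qed

lemma Z_not_inj:
  assumes "m < 4" and "(m, n) \<noteq> (0, 1)" and "(rot_vec ^^ m) (Z n) = (1, 0)"
  shows "\<not> inj Z"
proof -
  obtain a b where Zn: "Z n = (a, b)" by (cases "Z n")
  from assms(1) consider "m = 0" | "m = 1" | "m = 2" | "m = 3" by linarith
  then show ?thesis
  proof cases
    case 1
    then have "Z n = Z 1" and "n \<noteq> 1" using assms(2,3) Z_1 by auto
    then show ?thesis by (auto dest: injD)
  next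
    case 2
    then have "Z n = (rot_vec ^^ 3) (Z 1)"
      using assms(3) Z_1 Zn by (simp add: rot_vec_def numeral_3_eq_3)
    then show ?thesis using Z_rotated_not_inj[of n 3 1] by simp
  next
    case 3
    then have "Z n = (-1, 0)" using assms(3) Zn by (simp add: rot_vec_def numeral_2_eq_2)
    then show ?thesis by (rule Z_half_turn_not_inj)
  next
    case 4
    then have "Z n = (rot_vec ^^ 1) (Z 1)"
      using assms(3) Z_1 Zn by (simp add: rot_vec_def numeral_3_eq_3)
    then show ?thesis using Z_rotated_not_inj[of n 1 1] by simp
  qed
qed

end

theorem proposition11:
  fixes \<theta> :: morph
  assumes "paperfolding \<theta>" and "symmetric_morph \<theta>" and "perfect \<theta>"
  shows "Ssum ` language \<theta> = UNIV"
proof -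
  interpret symmetric_paperfolding \<theta>
    using assms by unfold_locales (auto simp: perfect_def)
  define visits where "visits p = {(j, n). j < (4::nat) \<and> (rot_vec ^^ j) (Z n) = p}" for p
  have card_visits: "card (visits p) = (if p = (0, 0) then 4 else 2)" for p
    using assms(3) unfolding perfect_def visits_def walk_map_rot_pow by blast
  obtain m n where "(m, n) \<in> visits (1, 0)" and "(m, n) \<noteq> (0, 1)"
    using card_visits[of "(1, 0)"] card_mono[of "{(0, 1)}" "visits (1, 0)"] by fastforce
  then have "\<not> inj Z" using Z_not_inj by (auto simp: visits_def)
  then obtain a b where "a < b" and "Z a = Z b"
    by (metis injI linorder_neqE_nat)
  then have "0 \<in> Ssum ` language \<theta>"
    using rot_Z_diff_in_Ssum_language[of a b 0] by simp
  moreover have "p \<in> Ssum ` language \<theta>" if "p \<noteq> 0" for p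
  proof -
    have "visits p \<noteq> {}" using card_visits[of p] that by (auto simp: zero_prod_def)
    then obtain j n where "(rot_vec ^^ j) (Z n) = p" by (auto simp: visits_def)
    moreover have "n \<noteq> 0" using calculation that by (cases n) auto
    ultimately show ?thesis using rot_Z_diff_in_Ssum_language[of 0 n j] by simp
  qed
  ultimately show ?thesis by (metis UNIV_eq_I)
qed

end
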